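(* Let $G=(V,\mathcal E)$ be an undirected connected graph on $n$ nodes, all of whose links carry the same weight $\bar w>0$. Let $\tau\ge0$ with $\tau\lambda_n<\pi/2$. (a) Suppose $G$ is vertex-transitive and the noise is one of the agent-associated structures (dynamics, sensor, receiver or emitter noise; see context). Then every agent centrality index satisfies $\eta_i=\bar\rho/n$, where $\bar\rho$ is the performance of the network with $\sigma_1=\dots=\sigma_n=1$. (b) Suppose $G$ is edge-transitive and the noise is one of the link-associated structures (communication or measurement noise). Then every link centrality index satisfies $\nu_e=\bar{\bar\rho}/|\mathcal E|$, where $\bar{\bar\rho}$ is the performance of the network with $\sigma_e=1$ for all links $e$.
   Context: Graph matrices: - $E$ is the signed incidence matrix (arbitrary orientation) and $W=\bar wI$. - $L=EWE^T$ is the Laplacian with largest eigenvalue $\lambda_n$; $\Delta$ is the weighted-degree matrix and $A=\Delta-L$. - $M_n=I_n-\frac1n\mathbf1\mathbf1^T$. The network is $$\dot x(t)=-L\,x(t-\tau)+B\,\xi(t),\qquad y=M_nx,$$ with $\xi$ a vector of mutually independent zero-mean Gaussian white noises with intensities $\sigma_k^2$. The uncertainty structures are: - agent-associated: dynamics $B=I_n$; sensor $B=L$; receiver $B=\Delta$; emitter $B=A$; - link-associated: communication $B=EW$; measurement $B=-E$. The performance is $$\rho_{ss}=\lim_{t\to\infty}\mathbb E[y^Ty]=\frac1{2\pi}\int\mathrm{Tr}[G^HG]d\omega,\qquad G(s)=M_n(sI+e^{-\tau s}L)^{-1}B\,\mathrm{diag}(\sigma_k).$$ Agent centrality is $\eta_i=\partial\rho_{ss}/\partial\sigma_i^2$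 and link centrality is $\nu_e=\partial\rho_{ss}/\partial\sigma_e^2$. A graph is vertex-transitive (resp. edge-transitive) if its automorphism group acts transitively on its vertices (resp. edges). *)

theory Defs
  imports "HOL-Analysis.Analysis"
begin

text \<open>Graph: finite vertex type 'n, finite edge type 'e; edge e joins
  src e and tgt e (this fixes the arbitrary orientation of the incidence matrix).\<close>

definition simple_graph :: "('e::finite \<Rightarrow> 'n::finite) \<Rightarrow> ('e \<Rightarrow> 'n) \<Rightarrow> bool" where
  "simple_graph src tgt \<longleftrightarrow> (\<forall>e. src e \<noteq> tgt e) \<and>
     (\<forall>e f. {src e, tgt e} = {src f, tgt f} \<longrightarrow> e = f)"

definition adj :: "('e::finite \<Rightarrow> 'n::finite) \<Rightarrow> ('e \<Rightarrow> 'n) \<Rightarrow> 'n \<Rightarrow> 'n \<Rightarrow> bool" where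
  "adj src tgt u v \<longleftrightarrow> (\<exists>e. {src e, tgt e} = {u, v})"

definition connected_graph :: "('e::finite \<Rightarrow> 'n::finite) \<Rightarrow> ('e \<Rightarrow> 'n) \<Rightarrow> bool" where
  "connected_graph src tgt \<longleftrightarrow> (\<forall>u v. (u, v) \<in> {(a, b). adj src tgt a b}\<^sup>*)"

definition graph_automorphism :: "('e::finite \<Rightarrow> 'n::finite) \<Rightarrow> ('e \<Rightarrow> 'n) \<Rightarrow> ('n \<Rightarrow> 'n) \<Rightarrow> bool" where
  "graph_automorphism src tgt p \<longleftrightarrow> bij p \<and> (\<forall>u v. adj src tgt u v \<longleftrightarrow> adj src tgt (p u) (p v))"

definition vertex_transitive :: "('e::finite \<Rightarrow> 'n::finite) \<Rightarrow> ('e \<Rightarrow> 'n) \<Rightarrow> bool" where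
  "vertex_transitive src tgt \<longleftrightarrow> (\<forall>u v. \<exists>p. graph_automorphism src tgt p \<and> p u = v)"

definition edge_transitive :: "('e::finite \<Rightarrow> 'n::finite) \<Rightarrow> ('e \<Rightarrow> 'n) \<Rightarrow> bool" where
  "edge_transitive src tgt \<longleftrightarrow> (\<forall>e f. \<exists>p. graph_automorphism src tgt p \<and>
       p ` {src e, tgt e} = {src f, tgt f})"

definition incidence :: "('e::finite \<Rightarrow> 'n::finite) \<Rightarrow> ('e \<Rightarrow> 'n) \<Rightarrow> real^'e^'n" where
  "incidence src tgt = (\<chi> v e. if v = src e then 1 else if v = tgt e then -1 else 0)"

definition Wmat :: "real \<Rightarrow> real^'e::finite^'e" where
  "Wmat w = w *\<^sub>R mat 1"

definition laplacian :: "('e::finite \<Rightarrow> 'n::finite) \<Rightarrow> ('e \<Rightarrow> 'n) \<Rightarrow> real \<Rightarrow> real^'n^'n" where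
  "laplacian src tgt w = incidence src tgt ** Wmat w ** transpose (incidence src tgt)"

definition degree_mat :: "('e::finite \<Rightarrow> 'n::finite) \<Rightarrow> ('e \<Rightarrow> 'n) \<Rightarrow> real \<Rightarrow> real^'n^'n" where
  "degree_mat src tgt w = (\<chi> i j. if i = j then laplacian src tgt w $ i $ i else 0)"

definition adjacency_mat :: "('e::finite \<Rightarrow> 'n::finite) \<Rightarrow> ('e \<Rightarrow> 'n) \<Rightarrow> real \<Rightarrow> real^'n^'n" where
  "adjacency_mat src tgt w = degree_mat src tgt w - laplacian src tgt w"

definition centering :: "real^'n::finite^'n" where
  "centering = mat 1 - (\<chi> i j. 1 / real CARD('n))"

definition largest_eigenvalue :: "real^'n::finite^'n \<Rightarrow> real" where
  "largest_eigenvalue A = Max {\<mu>. \<exists>x. x \<noteq> 0 \<and> A *v x = \<mu> *\<^sub>R x}"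

datatype agent_noise = Dynamics | Sensor | Receiver | Emitter
datatype link_noise = Communication | Measurement

definition B_agent :: "('e::finite \<Rightarrow> 'n::finite) \<Rightarrow> ('e \<Rightarrow> 'n) \<Rightarrow> real \<Rightarrow> agent_noise \<Rightarrow> real^'n^'n" where
  "B_agent src tgt w s = (case s of
      Dynamics \<Rightarrow> mat 1
    | Sensor \<Rightarrow> laplacian src tgt w
    | Receiver \<Rightarrow> degree_mat src tgt w
    | Emitter \<Rightarrow> adjacency_mat src tgt w)"

definition B_link :: "('e::finite \<Rightarrow> 'n::finite) \<Rightarrow> ('e \<Rightarrow> 'n) \<Rightarrow> real \<Rightarrow> link_noise \<Rightarrow> real^'e^'n" where
  "B_link src tgt w s = (case s of
      Communication \<Rightarrow> incidence src tgt ** Wmat w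
    | Measurement \<Rightarrow> - incidence src tgt)"

definition cmat :: "real^'m::finite^'n::finite \<Rightarrow> complex^'m^'n" where
  "cmat A = (\<chi> i j. complex_of_real (A $ i $ j))"

definition conj_transpose :: "complex^'m::finite^'n::finite \<Rightarrow> complex^'n^'m" where
  "conj_transpose A = (\<chi> i j. cnj (A $ j $ i))"

text \<open>G(j\<omega>) = M_n (j\<omega> I + e^{-\<tau> j\<omega>} L)^{-1} B diag(sqrt(s_k)), where s_k = \<sigma>_k^2.\<close>
definition transfer :: "real^'n::finite^'n \<Rightarrow> real^'k::finite^'n \<Rightarrow> real \<Rightarrow> ('k \<Rightarrow> real) \<Rightarrow> real \<Rightarrow> complex^'k^'n" where
  "transfer L B tau s \<omega> =
     cmat centering **
     matrix_inv (\<chi> i j. (if i = j then \<i> * complex_of_real \<omega> else 0)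
                          + exp (- \<i> * complex_of_real (\<omega> * tau)) * complex_of_real (L $ i $ j)) **
     cmat B ** cmat (\<chi> i j. if i = j then sqrt (s i) else 0)"

definition performance :: "real^'n::finite^'n \<Rightarrow> real^'k::finite^'n \<Rightarrow> real \<Rightarrow> ('k \<Rightarrow> real) \<Rightarrow> real" where
  "performance L B tau s =
     1 / (2 * pi) * integral UNIV (\<lambda>\<omega>. Re (trace (conj_transpose (transfer L B tau s \<omega>) ** transfer L B tau s \<omega>)))"

end

theory Submission
  imports Defs
begin

text \<open>Since the noises are independent, the performance is linear in the intensities,
  \<open>\<rho> = \<Sum>\<^sub>k \<sigma>\<^sub>k\<^sup>2 c\<^sub>k\<close>, where \<open>2\<pi> c\<^sub>k\<close> is the integral over all frequencies of the squared norm of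
  column \<open>k\<close> of \<open>M\<^sub>n K(\<omega>)\<^sup>-\<^sup>1 B\<close> with \<open>K(\<omega>) = j\<omega> I + exp(-j\<omega>\<tau>) L\<close>; so every centrality index
  is the constant \<open>c\<^sub>k\<close>. A graph automorphism \<open>p\<close> leaves \<open>L\<close>, \<open>M\<^sub>n\<close> and the agent noise
  matrices invariant under simultaneous permutation of rows and columns, hence also \<open>K(\<omega>)\<^sup>-\<^sup>1\<close>.
  Thus the columns \<open>k\<close> and \<open>p k\<close> have equal norms, and for link noise the column of an edge
  \<open>e\<close> is a multiple of the difference of the columns of \<open>M\<^sub>n K(\<omega>)\<^sup>-\<^sup>1\<close> at the end points of \<open>e\<close>.
  \<open>K(\<omega>)\<close> is invertible unless \<open>\<omega> = 0\<close> or \<open>cos (\<omega>\<tau>) = 0\<close>, a countable set that does not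
  affect the integral. Transitivity therefore makes all \<open>c\<^sub>k\<close> equal.

  The argument only uses linearity of the (Henstock-Kurzweil) integral, which holds whether or
  not the integral converges.\<close>

definition freq_matrix :: "real^'n::finite^'n \<Rightarrow> real \<Rightarrow> real \<Rightarrow> complex^'n^'n" where
  "freq_matrix L tau \<omega> = (\<chi> i j. (if i = j then \<i> * complex_of_real \<omega> else 0)
     + exp (- \<i> * complex_of_real (\<omega> * tau)) * complex_of_real (L $ i $ j))"

definition centered_resolvent :: "real^'n::finite^'n \<Rightarrow> real \<Rightarrow> real \<Rightarrow> complex^'n^'n" where
  "centered_resolvent L tau \<omega> = cmat centering ** matrix_inv (freq_matrix L tau \<omega>)"

definition unweighted_transfer ::
    "real^'n::finite^'n \<Rightarrow> real^'k::finite^'n \<Rightarrow> real \<Rightarrow> real \<Rightarrow> complex^'k^'n" where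
  "unweighted_transfer L B tau \<omega> = centered_resolvent L tau \<omega> ** cmat B"

definition column_energy ::
    "real^'n::finite^'n \<Rightarrow> real^'k::finite^'n \<Rightarrow> real \<Rightarrow> real \<Rightarrow> 'k \<Rightarrow> real" where
  "column_energy L B tau \<omega> k = (\<Sum>a\<in>UNIV. (cmod (unweighted_transfer L B tau \<omega> $ a $ k))\<^sup>2)"

subsection \<open>Linearity of the performance in the noise intensities\<close>

lemma matrix_mult_cmat_diag_nth:
  "(X ** cmat (\<chi> i j. if i = j then d i else 0)) $ a $ k = X $ a $ k * complex_of_real (d k)"
  unfolding matrix_matrix_mult_def cmat_def
  by (simp add: if_distrib[of complex_of_real] if_distrib[of "(*) _"] cong: if_cong)

lemma trace_transfer_eq_column_energy:
  "Re (trace (conj_transpose (transfer L B tau s \<omega>) ** transfer L B tau s \<omega>))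
     = (\<Sum>k\<in>UNIV. \<bar>s k\<bar> * column_energy L B tau \<omega> k)"
proof -
  let ?G = "transfer L B tau s \<omega>" and ?X = "unweighted_transfer L B tau \<omega>"
  have G: "?G $ a $ k = ?X $ a $ k * complex_of_real (sqrt (s k))" for a k
    unfolding transfer_def unweighted_transfer_def centered_resolvent_def freq_matrix_def
      matrix_mult_cmat_diag_nth ..
  have "Re (trace (conj_transpose ?G ** ?G)) = (\<Sum>k\<in>UNIV. \<Sum>a\<in>UNIV. Re (cnj (?G $ a $ k) * ?G $ a $ k))"
    unfolding trace_def matrix_matrix_mult_def conj_transpose_def by (simp add: Re_sum)
  also have "\<dots> = (\<Sum>k\<in>UNIV. \<Sum>a\<in>UNIV. (cmod (?G $ a $ k))\<^sup>2)"
    by (intro sum.cong refl) (metis Re_complex_of_real complex_norm_square mult.commute)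
  also have "\<dots> = (\<Sum>k\<in>UNIV. \<Sum>a\<in>UNIV. \<bar>s k\<bar> * (cmod (?X $ a $ k))\<^sup>2)"
    unfolding G by (intro sum.cong refl) (simp add: norm_mult power_mult_distrib power2_eq_square)
  finally show ?thesis
    unfolding column_energy_def by (simp add: sum_distrib_left)
qed

lemma performance_eq_sum_intensities:
  assumes "negligible S"
    and "\<And>\<omega> k. \<omega> \<notin> S \<Longrightarrow> column_energy L B tau \<omega> k = column_energy L B tau \<omega> k\<^sub>0"
  shows "performance L B tau s
           = (\<Sum>k\<in>UNIV. \<bar>s k\<bar>) * (1 / (2 * pi) * integral UNIV (\<lambda>\<omega>. column_energy L B tau \<omega> k\<^sub>0))"
proof -
  have "integral UNIV (\<lambda>\<omega>. \<Sum>k\<in>UNIV. \<bar>s k\<bar> * column_energy L B tau \<omega> k)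
      = integral UNIV (\<lambda>\<omega>. (\<Sum>k\<in>UNIV. \<bar>s k\<bar>) *\<^sub>R column_energy L B tau \<omega> k\<^sub>0)"
  proof (rule integral_spike[OF assms(1)])
    fix \<omega> assume "\<omega> \<in> UNIV - S"
    then have "(\<Sum>k\<in>UNIV. \<bar>s k\<bar> * column_energy L B tau \<omega> k)
        = (\<Sum>k\<in>UNIV. \<bar>s k\<bar> * column_energy L B tau \<omega> k\<^sub>0)"
      by (intro sum.cong refl arg_cong[where f = "(*) _"] assms(2)) blast
    then show "(\<Sum>k\<in>UNIV. \<bar>s k\<bar>) *\<^sub>R column_energy L B tau \<omega> k\<^sub>0
        = (\<Sum>k\<in>UNIV. \<bar>s k\<bar> * column_energy L B tau \<omega> k)"
      by (simp add: sum_distrib_right)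
  qed
  then show ?thesis
    unfolding performance_def trace_transfer_eq_column_energy by simp
qed

lemma performance_has_derivative_if_column_energy_const:
  fixes L :: "real^'n::finite^'n" and B :: "real^'k::finite^'n"
  assumes "negligible S"
    and "\<And>\<omega> k. \<omega> \<notin> S \<Longrightarrow> column_energy L B tau \<omega> k = column_energy L B tau \<omega> k\<^sub>0"
    and "s i > 0"
  shows "((\<lambda>t. performance L B tau (s(i := t))) has_real_derivative
           performance L B tau (\<lambda>_. 1) / real CARD('k)) (at (s i))"
proof -
  define C where "C = 1 / (2 * pi) * integral UNIV (\<lambda>\<omega>. column_energy L B tau \<omega> k\<^sub>0)"
  define A where "A = (\<Sum>k\<in>UNIV - {i}. \<bar>s k\<bar>)"
  have perf: "performance L B tau s' = (\<Sum>k\<in>UNIV. \<bar>s' k\<bar>) * C" for s'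
    unfolding C_def by (rule performance_eq_sum_intensities[OF assms(1,2)])
  have local_eq: "performance L B tau (s(i := t)) = (A + t) * C" if "t \<in> {0<..}" for t
  proof -
    have "(\<Sum>k\<in>UNIV. \<bar>(s(i := t)) k\<bar>) = \<bar>t\<bar> + (\<Sum>k\<in>UNIV - {i}. \<bar>(s(i := t)) k\<bar>)"
      by (subst sum.remove[of _ i]) auto
    also have "\<dots> = A + t"
      using that unfolding A_def by (auto intro: sum.cong)
    finally show ?thesis
      by (simp only: perf)
  qed
  have "((\<lambda>t. (A + t) * C) has_real_derivative C) (at (s i))"
    by (auto intro!: derivative_eq_intros)
  then have "((\<lambda>t. performance L B tau (s(i := t))) has_real_derivative C) (at (s i))"
    by (rule has_field_derivative_transform_within_open[where S = "{0<..}"])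
      (use assms(3) local_eq in auto)
  moreover have "performance L B tau (\<lambda>_. 1) = real CARD('k) * C"
    by (simp add: perf)
  ultimately show ?thesis by simp
qed

subsection \<open>The resolvent exists for almost all frequencies\<close>

lemma cmod_power2_of_real: "(complex_of_real (cmod z))\<^sup>2 = z * cnj z"
  by (metis complex_norm_square of_real_power)

lemma freq_matrix_mult_vec_nth:
  "(freq_matrix L tau \<omega> *v x) $ a = \<i> * complex_of_real \<omega> * x $ a
     + exp (- \<i> * complex_of_real (\<omega> * tau)) * (\<Sum>b\<in>UNIV. complex_of_real (L $ a $ b) * x $ b)"
proof -
  have "(freq_matrix L tau \<omega> *v x) $ a = (\<Sum>b\<in>UNIV. (if a = b then \<i> * complex_of_real \<omega> * x $ b else 0)
     + exp (- \<i> * complex_of_real (\<omega> * tau)) * (complex_of_real (L $ a $ b) * x $ b))"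
    unfolding freq_matrix_def matrix_vector_mult_def vec_lambda_beta
    by (intro sum.cong refl) (simp add: distrib_right)
  then show ?thesis
    by (simp add: sum.distrib sum_distrib_left)
qed

lemma quadratic_form_symmetric_in_Reals:
  fixes L :: "real^'n::finite^'n"
  assumes "\<And>a b. L $ a $ b = L $ b $ a"
  shows "(\<Sum>a\<in>UNIV. \<Sum>b\<in>UNIV. cnj (x $ a) * complex_of_real (L $ a $ b) * x $ b) \<in> \<real>"
proof -
  let ?q = "\<Sum>a\<in>UNIV. \<Sum>b\<in>UNIV. cnj (x $ a) * complex_of_real (L $ a $ b) * x $ b"
  have "cnj ?q = (\<Sum>a\<in>UNIV. \<Sum>b\<in>UNIV. x $ a * complex_of_real (L $ a $ b) * cnj (x $ b))"
    by simp
  also have "\<dots> = (\<Sum>b\<in>UNIV. \<Sum>a\<in>UNIV. x $ a * complex_of_real (L $ a $ b) * cnj (x $ b))"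
    by (rule sum.swap)
  also have "\<dots> = ?q"
    by (intro sum.cong refl) (simp add: assms mult_ac)
  finally show ?thesis
    using Reals_cnj_iff by blast
qed

text \<open>Taking the real part of \<open>x\<^sup>* K x = 0\<close> gives \<open>cos (\<omega>\<tau>) x\<^sup>* L x = 0\<close>, its imaginary part then
  \<open>\<omega> |x|\<^sup>2 = 0\<close> whenever \<open>cos (\<omega>\<tau>) \<noteq> 0\<close>.\<close>

lemma freq_matrix_singular_imp:
  fixes L :: "real^'n::finite^'n"
  assumes sym: "\<And>a b. L $ a $ b = L $ b $ a" and "\<not> invertible (freq_matrix L tau \<omega>)"
  shows "\<omega> = 0 \<or> cos (\<omega> * tau) = 0"
proof (rule disjCI)
  assume cos: "cos (\<omega> * tau) \<noteq> 0"
  let ?e = "exp (- \<i> * complex_of_real (\<omega> * tau))"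
  obtain x where "x \<noteq> 0" and Kx: "freq_matrix L tau \<omega> *v x = 0"
    using assms(2) unfolding invertible_left_inverse matrix_left_invertible_ker by blast
  define q where "q = (\<Sum>a\<in>UNIV. \<Sum>b\<in>UNIV. cnj (x $ a) * complex_of_real (L $ a $ b) * x $ b)"
  define N where "N = (\<Sum>a\<in>UNIV. (cmod (x $ a))\<^sup>2)"
  have "N > 0"
  proof -
    obtain a where "x $ a \<noteq> 0" using \<open>x \<noteq> 0\<close> by (metis vec_eq_iff zero_index)
    then have "0 < (cmod (x $ a))\<^sup>2" by simp
    also have "\<dots> \<le> N" unfolding N_def by (rule member_le_sum) auto
    finally show ?thesis .
  qed
  have "0 = (\<Sum>a\<in>UNIV. cnj (x $ a) * (freq_matrix L tau \<omega> *v x) $ a)"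
    using Kx by simp
  also have "\<dots> = \<i> * complex_of_real \<omega> * complex_of_real N + ?e * q"
    unfolding freq_matrix_mult_vec_nth N_def q_def
    by (simp add: distrib_left sum.distrib sum_distrib_left cmod_power2_of_real mult_ac)
  finally have eq0: "\<i> * complex_of_real \<omega> * complex_of_real N + ?e * q = 0" ..
  obtain r where q: "q = complex_of_real r"
    using quadratic_form_symmetric_in_Reals[OF sym, of x] Reals_cases unfolding q_def by blast
  have "cos (\<omega> * tau) * r = 0"
    using arg_cong[OF eq0, of Re] unfolding q by (simp add: Re_exp)
  with cos have "r = 0" by simp
  then have "\<omega> * N = 0"
    using eq0 unfolding q by (simp add: complex_eq_iff)
  then show "\<omega> = 0"
    using \<open>N > 0\<close> by simp
qed

lemma negligible_singular_frequencies:
  fixes L :: "real^'n::finite^'n"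
  assumes "\<And>a b. L $ a $ b = L $ b $ a"
  shows "negligible {\<omega>. \<not> invertible (freq_matrix L tau \<omega>)}"
proof -
  let ?Z = "insert 0 (range (\<lambda>i::int. of_int i * (pi / 2) / tau))"
  have "{\<omega>. \<not> invertible (freq_matrix L tau \<omega>)} \<subseteq> ?Z"
  proof
    fix \<omega> assume "\<omega> \<in> {\<omega>. \<not> invertible (freq_matrix L tau \<omega>)}"
    then consider "\<omega> = 0" | "cos (\<omega> * tau) = 0"
      using freq_matrix_singular_imp[OF assms] by blast
    then show "\<omega> \<in> ?Z"
    proof cases
      case 2
      then have "tau \<noteq> 0" by auto
      obtain i :: int where "\<omega> * tau = of_int i * (pi / 2)"
        using 2 cos_zero_iff_int by blast
      then have "\<omega> = of_int i * (pi / 2) / tau"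
        using \<open>tau \<noteq> 0\<close> by (simp add: eq_divide_eq)
      then show ?thesis by blast
    qed simp
  qed
  moreover have "negligible (\<Union>z\<in>?Z. {z})"
    by (rule negligible_countable_Union) auto
  then have "negligible ?Z" by simp
  ultimately show ?thesis
    using negligible_subset by blast
qed

subsection \<open>Invariance under simultaneous permutation of rows and columns\<close>

definition perm_invariant :: "('n \<Rightarrow> 'n) \<Rightarrow> 'a^'n::finite^'n \<Rightarrow> bool" where
  "perm_invariant p A \<longleftrightarrow> (\<forall>a b. A $ p a $ p b = A $ a $ b)"

lemma sum_UNIV_reindex_bij: "bij p \<Longrightarrow> (\<Sum>b\<in>UNIV. g (p b)) = (\<Sum>b\<in>UNIV. g b)"
  by (rule sum.reindex_bij_betw) (simp add: bij_def bij_betw_def)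

lemma perm_invariant_mult:
  fixes A B :: "'a::semiring_1^'n::finite^'n"
  assumes "bij p" "perm_invariant p A" "perm_invariant p B"
  shows "perm_invariant p (A ** B)"
  unfolding perm_invariant_def
proof (intro allI)
  fix a c
  have "(A ** B) $ p a $ p c = (\<Sum>b\<in>UNIV. A $ p a $ p b * B $ p b $ p c)"
    using sum_UNIV_reindex_bij[OF assms(1), of "\<lambda>b. A $ p a $ b * B $ b $ p c"]
    by (simp add: matrix_matrix_mult_def)
  also have "\<dots> = (A ** B) $ a $ c"
    using assms(2,3) by (simp add: perm_invariant_def matrix_matrix_mult_def)
  finally show "(A ** B) $ p a $ p c = (A ** B) $ a $ c" .
qed

lemma perm_invariant_diff: "perm_invariant p A \<Longrightarrow> perm_invariant p B \<Longrightarrow> perm_invariant p (A - B)"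
  unfolding perm_invariant_def by simp

lemma perm_invariant_cmat: "perm_invariant p A \<Longrightarrow> perm_invariant p (cmat A)"
  unfolding perm_invariant_def cmat_def by simp

lemma perm_invariant_mat: "inj p \<Longrightarrow> perm_invariant p (mat c)"
  unfolding perm_invariant_def mat_def by (simp add: inj_eq)

lemma perm_invariant_centering: "inj p \<Longrightarrow> perm_invariant p (centering :: real^'n::finite^'n)"
  unfolding perm_invariant_def centering_def mat_def by (simp add: inj_eq)

lemma perm_invariant_diag:
  "inj p \<Longrightarrow> perm_invariant p A \<Longrightarrow> perm_invariant p (\<chi> i j. if i = j then A $ i $ i else 0)"
  unfolding perm_invariant_def by (simp add: inj_eq)

lemma perm_invariant_freq_matrix:
  "inj p \<Longrightarrow> perm_invariant p L \<Longrightarrow> perm_invariant p (freq_matrix L tau \<omega>)"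
  unfolding perm_invariant_def freq_matrix_def by (simp add: inj_eq)

lemma matrix_inv_mult:
  assumes "invertible (K :: 'a::semiring_1^'n::finite^'n)"
  shows "K ** matrix_inv K = mat 1" "matrix_inv K ** K = mat 1"
  using someI_ex[OF assms[unfolded invertible_def]] unfolding matrix_inv_def by auto

lemma perm_invariant_matrix_inv:
  fixes K :: "'a::semiring_1^'n::finite^'n"
  assumes p: "bij p" and K: "invertible K" and "perm_invariant p K"
  shows "perm_invariant p (matrix_inv K)"
proof -
  define Y where "Y = (\<chi> a b. matrix_inv K $ p a $ p b)"
  have "(K ** Y) $ a $ c = mat 1 $ a $ c" for a c
  proof -
    have "(K ** Y) $ a $ c = (\<Sum>b\<in>UNIV. K $ p a $ p b * matrix_inv K $ p b $ p c)"
      using \<open>perm_invariant p K\<close> by (simp add: matrix_matrix_mult_def Y_def perm_invariant_def)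
    also have "\<dots> = (K ** matrix_inv K) $ p a $ p c"
      using sum_UNIV_reindex_bij[OF p, of "\<lambda>b. K $ p a $ b * matrix_inv K $ b $ p c"]
      by (simp add: matrix_matrix_mult_def)
    also have "\<dots> = mat 1 $ a $ c"
      using matrix_inv_mult(1)[OF K] p by (simp add: mat_def bij_is_inj inj_eq)
    finally show ?thesis .
  qed
  then have "K ** Y = mat 1" by (simp add: vec_eq_iff)
  then have "matrix_inv K = Y"
    by (metis matrix_inv_mult(2)[OF K] matrix_mul_assoc matrix_mul_lid matrix_mul_rid)
  then show ?thesis
    unfolding perm_invariant_def Y_def by (metis vec_lambda_beta)
qed

subsection \<open>Graph automorphisms and the Laplacian\<close>

lemma simple_graph_loopless: "simple_graph src tgt \<Longrightarrow> src e \<noteq> tgt e"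
  unfolding simple_graph_def by blast

lemma graph_automorphism_bij: "graph_automorphism src tgt p \<Longrightarrow> bij p"
  unfolding graph_automorphism_def by blast

lemma laplacian_nth:
  "laplacian src tgt w $ a $ b = w * (\<Sum>e\<in>UNIV. incidence src tgt $ a $ e * incidence src tgt $ b $ e)"
proof -
  have "laplacian src tgt w = w *\<^sub>R (incidence src tgt ** transpose (incidence src tgt))"
    unfolding laplacian_def Wmat_def by (simp add: matrix_scalar_ac scalar_matrix_assoc[symmetric])
  then show ?thesis by (simp add: matrix_matrix_mult_def transpose_def)
qed

lemma laplacian_symmetric: "laplacian src tgt w $ a $ b = laplacian src tgt w $ b $ a"
  unfolding laplacian_nth by (simp add: mult.commute)

lemma incidence_column_sum:
  assumes "src e \<noteq> tgt e"
  shows "(\<Sum>b\<in>UNIV. incidence src tgt $ b $ e) = 0"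
proof -
  have "incidence src tgt $ b $ e = (if b = src e then 1 else 0) - (if b = tgt e then 1 else 0)" for b
    using assms unfolding incidence_def by auto
  then show ?thesis by (simp add: sum_subtractf)
qed

lemma laplacian_row_sum:
  assumes "\<And>e. src e \<noteq> tgt e"
  shows "(\<Sum>b\<in>UNIV. laplacian src tgt w $ a $ b) = 0"
proof -
  have "(\<Sum>b\<in>UNIV. laplacian src tgt w $ a $ b)
      = w * (\<Sum>b\<in>UNIV. \<Sum>e\<in>UNIV. incidence src tgt $ a $ e * incidence src tgt $ b $ e)"
    unfolding laplacian_nth by (simp add: sum_distrib_left)
  also have "\<dots> = w * (\<Sum>e\<in>UNIV. incidence src tgt $ a $ e * (\<Sum>b\<in>UNIV. incidence src tgt $ b $ e))"
    by (subst sum.swap) (simp add: sum_distrib_left)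
  also have "\<dots> = 0"
    by (simp add: incidence_column_sum assms)
  finally show ?thesis .
qed

lemma laplacian_diag:
  assumes "\<And>e. src e \<noteq> tgt e"
  shows "laplacian src tgt w $ a $ a = - (\<Sum>b\<in>UNIV - {a}. laplacian src tgt w $ a $ b)"
  using laplacian_row_sum[of src tgt w a, OF assms] sum.remove[of UNIV a "\<lambda>b. laplacian src tgt w $ a $ b"]
  by simp

lemma laplacian_offdiag:
  assumes sg: "simple_graph src tgt" and "a \<noteq> b"
  shows "laplacian src tgt w $ a $ b = (if adj src tgt a b then - w else 0)"
proof -
  have inc: "incidence src tgt $ a $ e * incidence src tgt $ b $ e = (if {src e, tgt e} = {a, b} then -1 else 0)" for e
    using assms unfolding simple_graph_def incidence_def by (auto simp: doubleton_eq_iff)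
  show ?thesis
  proof (cases "adj src tgt a b")
    case True
    then obtain e\<^sub>0 where e\<^sub>0: "{src e\<^sub>0, tgt e\<^sub>0} = {a, b}" unfolding adj_def by blast
    then have "{src e, tgt e} = {a, b} \<longleftrightarrow> e = e\<^sub>0" for e
      using sg unfolding simple_graph_def by metis
    then show ?thesis using True unfolding laplacian_nth inc by simp
  next
    case False
    then show ?thesis unfolding laplacian_nth inc adj_def by simp
  qed
qed

lemma perm_invariant_laplacian:
  assumes sg: "simple_graph src tgt" and "graph_automorphism src tgt p"
  shows "perm_invariant p (laplacian src tgt w)"
proof -
  let ?L = "laplacian src tgt w"
  have bp: "bij p" and adj: "\<And>u v. adj src tgt (p u) (p v) \<longleftrightarrow> adj src tgt u v"
    using assms(2) unfolding graph_automorphism_def by auto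
  then have inj: "inj p" by (simp add: bij_is_inj)
  have offdiag: "?L $ p a $ p b = ?L $ a $ b" if "a \<noteq> b" for a b
    using that inj by (simp add: laplacian_offdiag[OF sg] adj inj_eq)
  have "?L $ p a $ p a = ?L $ a $ a" for a
  proof -
    have "p ` (UNIV - {a}) = UNIV - {p a}"
      using bp by (simp add: image_set_diff inj bij_is_surj)
    then have "(\<Sum>b\<in>UNIV - {p a}. ?L $ p a $ b) = (\<Sum>b\<in>UNIV - {a}. ?L $ p a $ p b)"
      using sum.reindex[OF inj_on_subset[OF inj], of "UNIV - {a}" "\<lambda>b. ?L $ p a $ b"] by simp
    also have "\<dots> = (\<Sum>b\<in>UNIV - {a}. ?L $ a $ b)"
      by (rule sum.cong) (auto intro: offdiag)
    finally show ?thesis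
      by (simp only: laplacian_diag[OF simple_graph_loopless[OF sg]])
  qed
  with offdiag show ?thesis
    unfolding perm_invariant_def by metis
qed

lemma perm_invariant_B_agent:
  assumes "simple_graph src tgt" and "graph_automorphism src tgt p"
  shows "perm_invariant p (B_agent src tgt w nz)"
proof -
  have inj: "inj p" using graph_automorphism_bij[OF assms(2)] by (rule bij_is_inj)
  note L = perm_invariant_laplacian[OF assms]
  have D: "perm_invariant p (degree_mat src tgt w)"
    unfolding degree_mat_def by (rule perm_invariant_diag[OF inj L])
  show ?thesis
    by (cases nz) (simp_all add: B_agent_def adjacency_mat_def perm_invariant_mat[OF inj] L D perm_invariant_diff)
qed

lemma perm_invariant_centered_resolvent:
  assumes "simple_graph src tgt" and "graph_automorphism src tgt p"
    and "invertible (freq_matrix (laplacian src tgt w) tau \<omega>)"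
  shows "perm_invariant p (centered_resolvent (laplacian src tgt w) tau \<omega>)"
proof -
  have bp: "bij p" by (rule graph_automorphism_bij[OF assms(2)])
  then show ?thesis
    unfolding centered_resolvent_def
    by (intro perm_invariant_mult perm_invariant_cmat perm_invariant_centering perm_invariant_matrix_inv
        perm_invariant_freq_matrix perm_invariant_laplacian assms bij_is_inj)
qed

lemma column_energy_agent_automorphism:
  assumes "simple_graph src tgt" and "graph_automorphism src tgt p"
    and "invertible (freq_matrix (laplacian src tgt w) tau \<omega>)"
  shows "column_energy (laplacian src tgt w) (B_agent src tgt w nz) tau \<omega> (p k)
       = column_energy (laplacian src tgt w) (B_agent src tgt w nz) tau \<omega> k"
proof -
  let ?X = "unweighted_transfer (laplacian src tgt w) (B_agent src tgt w nz) tau \<omega>"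
  have bp: "bij p" by (rule graph_automorphism_bij[OF assms(2)])
  have "perm_invariant p ?X"
    unfolding unweighted_transfer_def
    by (intro perm_invariant_mult[OF bp] perm_invariant_centered_resolvent perm_invariant_cmat
        perm_invariant_B_agent assms)
  then show ?thesis
    unfolding column_energy_def perm_invariant_def
    using sum_UNIV_reindex_bij[OF bp, of "\<lambda>a. (cmod (?X $ a $ p k))\<^sup>2"] by simp
qed

lemma B_link_eq_scaleR_incidence:
  "B_link src tgt w nz = (case nz of Communication \<Rightarrow> w | Measurement \<Rightarrow> -1) *\<^sub>R incidence src tgt"
  unfolding B_link_def Wmat_def by (cases nz) (simp_all add: matrix_scalar_ac)

lemma cmat_scaleR: "cmat (c *\<^sub>R A) = c *\<^sub>R cmat A"
  unfolding cmat_def by (simp add: vec_eq_iff of_real_def)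

lemma matrix_mult_cmat_incidence_nth:
  assumes "src e \<noteq> tgt e"
  shows "(Y ** cmat (incidence src tgt)) $ a $ e = Y $ a $ src e - Y $ a $ tgt e"
proof -
  have "Y $ a $ b * cmat (incidence src tgt) $ b $ e
      = (if b = src e then Y $ a $ b else 0) - (if b = tgt e then Y $ a $ b else 0)" for b
    using assms unfolding cmat_def incidence_def by auto
  then show ?thesis
    unfolding matrix_matrix_mult_def by (simp add: sum_subtractf)
qed

lemma column_energy_link:
  assumes "src e \<noteq> tgt e"
  shows "column_energy (laplacian src tgt w) (B_link src tgt w nz) tau \<omega> e
    = (case nz of Communication \<Rightarrow> w | Measurement \<Rightarrow> -1)\<^sup>2 *
      (\<Sum>a\<in>UNIV. (cmod (centered_resolvent (laplacian src tgt w) tau \<omega> $ a $ src e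
                        - centered_resolvent (laplacian src tgt w) tau \<omega> $ a $ tgt e))\<^sup>2)"
  using assms
  unfolding column_energy_def unweighted_transfer_def B_link_eq_scaleR_incidence cmat_scaleR
    matrix_scalar_ac
  by (simp add: matrix_mult_cmat_incidence_nth scaleR_right_diff_distrib[symmetric] power_mult_distrib
      sum_distrib_left)

lemma column_energy_link_automorphism:
  assumes sg: "simple_graph src tgt" and ga: "graph_automorphism src tgt p"
    and "invertible (freq_matrix (laplacian src tgt w) tau \<omega>)"
    and "p ` {src e, tgt e} = {src f, tgt f}"
  shows "column_energy (laplacian src tgt w) (B_link src tgt w nz) tau \<omega> f
       = column_energy (laplacian src tgt w) (B_link src tgt w nz) tau \<omega> e"
proof -
  let ?Y = "centered_resolvent (laplacian src tgt w) tau \<omega>"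
  define D where "D u v = (\<Sum>a\<in>UNIV. (cmod (?Y $ a $ u - ?Y $ a $ v))\<^sup>2)" for u v
  have bp: "bij p" by (rule graph_automorphism_bij[OF ga])
  have "perm_invariant p ?Y"
    by (rule perm_invariant_centered_resolvent[OF sg ga assms(3)])
  then have D_perm: "D (p u) (p v) = D u v" for u v
    unfolding D_def perm_invariant_def
    using sum_UNIV_reindex_bij[OF bp, of "\<lambda>a. (cmod (?Y $ a $ p u - ?Y $ a $ p v))\<^sup>2"] by simp
  have D_sym: "D u v = D v u" for u v
    unfolding D_def by (simp add: norm_minus_commute)
  have "{p (src e), p (tgt e)} = {src f, tgt f}" using assms(4) by simp
  then have "D (src f) (tgt f) = D (src e) (tgt e)"
    by (metis D_perm D_sym doubleton_eq_iff)
  moreover have "src e \<noteq> tgt e" "src f \<noteq> tgt f"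
    using sg by (simp_all add: simple_graph_loopless)
  ultimately show ?thesis
    by (simp add: column_energy_link D_def)
qed

lemma column_energy_agent_eq_if_vertex_transitive:
  assumes "simple_graph src tgt" and "vertex_transitive src tgt"
    and "invertible (freq_matrix (laplacian src tgt w) tau \<omega>)"
  shows "column_energy (laplacian src tgt w) (B_agent src tgt w nz) tau \<omega> k
       = column_energy (laplacian src tgt w) (B_agent src tgt w nz) tau \<omega> i"
proof -
  obtain p where "graph_automorphism src tgt p" and "p i = k"
    using assms(2) unfolding vertex_transitive_def by blast
  then show ?thesis
    using column_energy_agent_automorphism[OF assms(1) _ assms(3)] by metis
qed

lemma column_energy_link_eq_if_edge_transitive:
  assumes "simple_graph src tgt" and "edge_transitive src tgt"
    and "invertible (freq_matrix (laplacian src tgt w) tau \<omega>)"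
  shows "column_energy (laplacian src tgt w) (B_link src tgt w nz) tau \<omega> f
       = column_energy (laplacian src tgt w) (B_link src tgt w nz) tau \<omega> e"
proof -
  obtain p where "graph_automorphism src tgt p" and "p ` {src e, tgt e} = {src f, tgt f}"
    using assms(2) unfolding edge_transitive_def by blast
  then show ?thesis
    using column_energy_link_automorphism[OF assms(1) _ assms(3)] by metis
qed

theorem proposition1:
  fixes src tgt :: "'e::finite \<Rightarrow> 'n::finite" and w tau :: real
  assumes "simple_graph src tgt" and "connected_graph src tgt"
    and "w > 0" and "tau \<ge> 0"
    and "tau * largest_eigenvalue (laplacian src tgt w) < pi / 2"
  shows "(vertex_transitive src tgt \<longrightarrow>
           (\<forall>nz s i. (\<forall>k. s k > 0) \<longrightarrow>
              ((\<lambda>t. performance (laplacian src tgt w) (B_agent src tgt w nz) tau (s(i := t)))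
                 has_real_derivative
                 (performance (laplacian src tgt w) (B_agent src tgt w nz) tau (\<lambda>_. 1) / real CARD('n)))
               (at (s i))))
       \<and> (edge_transitive src tgt \<longrightarrow>
           (\<forall>nz s e. (\<forall>k. s k > 0) \<longrightarrow>
              ((\<lambda>t. performance (laplacian src tgt w) (B_link src tgt w nz) tau (s(e := t)))
                 has_real_derivative
                 (performance (laplacian src tgt w) (B_link src tgt w nz) tau (\<lambda>_. 1) / real CARD('e)))
               (at (s e))))"
proof (intro conjI impI allI)
  let ?L = "laplacian src tgt w"
  have negl: "negligible {\<omega>. \<not> invertible (freq_matrix ?L tau \<omega>)}"
    by (rule negligible_singular_frequencies) (rule laplacian_symmetric)
  {
    fix nz and s :: "'n \<Rightarrow> real" and i
    assume "vertex_transitive src tgt" and pos: "\<forall>k. s k > 0"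
    show "((\<lambda>t. performance ?L (B_agent src tgt w nz) tau (s(i := t))) has_real_derivative
           performance ?L (B_agent src tgt w nz) tau (\<lambda>_. 1) / real CARD('n)) (at (s i))"
      by (rule performance_has_derivative_if_column_energy_const[OF negl _ pos[rule_format]])
        (rule column_energy_agent_eq_if_vertex_transitive[OF assms(1) \<open>vertex_transitive src tgt\<close>], simp)
  next
    fix nz and s :: "'e \<Rightarrow> real" and e
    assume "edge_transitive src tgt" and pos: "\<forall>k. s k > 0"
    show "((\<lambda>t. performance ?L (B_link src tgt w nz) tau (s(e := t))) has_real_derivative
           performance ?L (B_link src tgt w nz) tau (\<lambda>_. 1) / real CARD('e)) (at (s e))"
      by (rule performance_has_derivative_if_column_energy_const[OF negl _ pos[rule_format]])
        (rule column_energy_link_eq_if_edge_transitive[OF assms(1) \<open>edge_transitive src tgt\<close>], simp)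
  }
qed

end
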